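(* Let $R=\bigoplus_{s\in S}R_s$ be an $S$-graded ring inducing $S$ which is nearly epsilon-strongly graded. Then the following are equivalent: (i) $R$ is graded von Neumann regular; (ii) every principal right homogeneous ideal of $R$ is generated by a homogeneous idempotent element (and likewise for left ideals); (iii) every right ideal $I$ of $R$ generated by finitely many homogeneous elements $x_1,\dots,x_n$ such that $\deg(x_i)(\deg(x_i))^{-1}=e$ for all $i$, for some nonzero idempotent $e\in S$, is generated by a homogeneous idempotent element (and likewise for left ideals).
   Context: Rings are associative, not necessarily unital. $S$-graded ring inducing $S$: $S$ a partial groupoid, $R=\bigoplus_{s\in S}R_s$, $R_sR_t\subseteq R_{st}$ when $st$ defined, $R_sR_t\ne0$ implies $st$ defined. Convention: $0\in S$, $R_0=0$, $S\setminus\{0\}=\{s:R_s\ne0\}$, undefined products set to $0$, $0$ absorbing. $H_R=\bigcup_sR_s$; for nonzero $x\in H_R$, $\deg(x)$ is the unique $s$ with $x\in R_s$. A one-sided ideal $J$ is homogeneous if $J=\bigoplus_s(J\cap R_s)$. $S$ cancellative: $0\ne su=tu$ or $0\ne us=ut$ implies $s=t$. $I(S)$: idempotents of $S$. (LRI): for every $s\in S$ there exist $s^{-1}\in S$, $e,f\in I(S)$ with $es=sf=s$, $fs^{-1}=s^{-1}e=s^{-1}$, $ss^{-1}=e$, $s^{-1}s=f$. $R_sR_t$ denotes the additive subgroup generated by products. $R$ is nearly epsilon-strongly graded if $S$ is cancellative and satisfies (LRI), and for every $s$ and $x\in R_s$ there are $\epsilon(x)\in R_sR_{s^{-1}}$,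 $\epsilon'(x)\in R_{s^{-1}}R_s$ with $\epsilon(x)x=x=x\epsilon'(x)$. $R$ is graded von Neumann regular if $x\in xRx$ for all $x\in H_R$. *)

theory Defs
  imports Main
begin

text \<open>The ring R is the whole (not necessarily unital, associative) ring type 'a.
  The partial groupoid S (with adjoined absorbing zero z, undefined products set to z)
  is the whole type 's with multiplication m.\<close>

definition add_subgroup :: "'a::ring set \<Rightarrow> bool" where
  "add_subgroup A \<longleftrightarrow> 0 \<in> A \<and> (\<forall>x\<in>A. \<forall>y\<in>A. x + y \<in> A) \<and> (\<forall>x\<in>A. - x \<in> A)"

definition graded_ring_inducing :: "('s \<Rightarrow> 's \<Rightarrow> 's) \<Rightarrow> 's \<Rightarrow> ('s \<Rightarrow> 'a::ring set) \<Rightarrow> bool" where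
  "graded_ring_inducing m z G \<longleftrightarrow>
     (\<forall>s. m z s = z \<and> m s z = z) \<and>
     (\<forall>s. add_subgroup (G s)) \<and>
     G z = {0} \<and>
     (\<forall>s. s \<noteq> z \<longleftrightarrow> G s \<noteq> {0}) \<and>
     (\<forall>x. \<exists>F f. finite F \<and> (\<forall>s\<in>F. f s \<in> G s) \<and> x = (\<Sum>s\<in>F. f s)) \<and>
     (\<forall>F f. finite F \<and> (\<forall>s\<in>F. f s \<in> G s) \<and> (\<Sum>s\<in>F. f s) = 0 \<longrightarrow> (\<forall>s\<in>F. f s = 0)) \<and>
     (\<forall>s t. \<forall>x\<in>G s. \<forall>y\<in>G t. x * y \<in> G (m s t))"

definition cancellative :: "('s \<Rightarrow> 's \<Rightarrow> 's) \<Rightarrow> 's \<Rightarrow> bool" where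
  "cancellative m z \<longleftrightarrow>
     (\<forall>s t u. (m s u \<noteq> z \<and> m s u = m t u \<longrightarrow> s = t) \<and> (m u s \<noteq> z \<and> m u s = m u t \<longrightarrow> s = t))"

definition lri_wit :: "('s \<Rightarrow> 's \<Rightarrow> 's) \<Rightarrow> 's \<Rightarrow> 's \<Rightarrow> 's \<Rightarrow> 's \<Rightarrow> bool" where
  "lri_wit m s s' e f \<longleftrightarrow> m e e = e \<and> m f f = f \<and> m e s = s \<and> m s f = s \<and>
     m f s' = s' \<and> m s' e = s' \<and> m s s' = e \<and> m s' s = f"

definition LRI :: "('s \<Rightarrow> 's \<Rightarrow> 's) \<Rightarrow> bool" where
  "LRI m \<longleftrightarrow> (\<forall>s. \<exists>s' e f. lri_wit m s s' e f)"

text \<open>s^{-1} (unique under cancellativity and (LRI)).\<close>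
definition ginv :: "('s \<Rightarrow> 's \<Rightarrow> 's) \<Rightarrow> 's \<Rightarrow> 's" where
  "ginv m s = (THE s'. \<exists>e f. lri_wit m s s' e f)"

definition prodset :: "'a::ring set \<Rightarrow> 'a set \<Rightarrow> 'a set" where
  "prodset A B = {sum_list (map (\<lambda>(a, b). a * b) ps) | ps. set ps \<subseteq> A \<times> B}"

definition nearly_eps_strongly_graded :: "('s \<Rightarrow> 's \<Rightarrow> 's) \<Rightarrow> 's \<Rightarrow> ('s \<Rightarrow> 'a::ring set) \<Rightarrow> bool" where
  "nearly_eps_strongly_graded m z G \<longleftrightarrow>
     graded_ring_inducing m z G \<and> cancellative m z \<and> LRI m \<and>
     (\<forall>s. \<forall>x\<in>G s.
        (\<exists>a\<in>prodset (G s) (G (ginv m s)). a * x = x) \<and>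
        (\<exists>b\<in>prodset (G (ginv m s)) (G s). x * b = x))"

definition homog :: "('s \<Rightarrow> 'a::ring set) \<Rightarrow> 'a set" where
  "homog G = (\<Union>s. G s)"

definition deg :: "('s \<Rightarrow> 'a::ring set) \<Rightarrow> 'a \<Rightarrow> 's" where
  "deg G x = (THE s. x \<in> G s)"

definition right_ideal :: "'a::ring set \<Rightarrow> bool" where
  "right_ideal J \<longleftrightarrow> add_subgroup J \<and> (\<forall>x\<in>J. \<forall>r. x * r \<in> J)"

definition left_ideal :: "'a::ring set \<Rightarrow> bool" where
  "left_ideal J \<longleftrightarrow> add_subgroup J \<and> (\<forall>x\<in>J. \<forall>r. r * x \<in> J)"

definition rideal_gen :: "'a::ring set \<Rightarrow> 'a set" where
  "rideal_gen X = \<Inter>{J. right_ideal J \<and> X \<subseteq> J}"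

definition lideal_gen :: "'a::ring set \<Rightarrow> 'a set" where
  "lideal_gen X = \<Inter>{J. left_ideal J \<and> X \<subseteq> J}"

definition graded_von_neumann_regular :: "('s \<Rightarrow> 'a::ring set) \<Rightarrow> bool" where
  "graded_von_neumann_regular G \<longleftrightarrow> (\<forall>x\<in>homog G. \<exists>r. x = x * r * x)"

end

theory Submission
  imports Defs
begin

text \<open>
  Graded regularity of a homogeneous element of degree \<open>s\<close> can always be witnessed by an
  element of degree \<open>s\<^sup>-\<^sup>1\<close>: comparing components of degree \<open>s\<close> in \<open>x = x r x\<close>, only
  the summands of \<open>r\<close> of degrees \<open>t\<close> with \<open>s t s = s\<close> contribute, and cancellativity forces
  \<open>t = s\<^sup>-\<^sup>1\<close>.

  (i) \<open>\<Longrightarrow>\<close> (iii) is proved by induction on the generators. Suppose the right ideal generated by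
  the first generators is generated by an idempotent \<open>u\<close> of degree \<open>e\<close>, and let \<open>x\<close> be the next
  one, of degree \<open>s\<close> with \<open>s s\<^sup>-\<^sup>1 = e\<close>. Then \<open>x' = x - u x\<close> has degree \<open>s\<close>, so
  \<open>x' = x' r x'\<close> with \<open>r\<close> of degree \<open>s\<^sup>-\<^sup>1\<close>, and \<open>v = x' r\<close> is an idempotent of degree \<open>e\<close>
  generating the same right ideal as \<open>x'\<close>, with \<open>u v = 0\<close>. Hence \<open>w = u + v - v u\<close> is an
  idempotent of degree \<open>e\<close> with \<open>w u = u\<close> and \<open>w v = v\<close>, which generates the right ideal
  generated by \<open>u\<close> and \<open>x\<close>. (iii) \<open>\<Longrightarrow>\<close> (ii) is the case of one generator, and
  (ii) \<open>\<Longrightarrow>\<close> (i) holds because \<open>x \<in> x R\<close> in a nearly epsilon-strongly graded ring: if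
  \<open>x R = u R\<close> for an idempotent \<open>u\<close>, then \<open>u = x c\<close> and \<open>x = u x\<close>, so \<open>x = x c x\<close>.
\<close>

lemma add_subgroup_add: "add_subgroup A \<Longrightarrow> x \<in> A \<Longrightarrow> y \<in> A \<Longrightarrow> x + y \<in> A"
  unfolding add_subgroup_def by blast

lemma add_subgroup_diff: "add_subgroup A \<Longrightarrow> x \<in> A \<Longrightarrow> y \<in> A \<Longrightarrow> x - y \<in> A"
  unfolding add_subgroup_def by (metis diff_conv_add_uminus)

lemma add_subgroup_sum:
  assumes "add_subgroup A" "\<And>i. i \<in> F \<Longrightarrow> g i \<in> A"
  shows "sum g F \<in> A"
  using assms(2)
  by (induction F rule: infinite_finite_induct) (use assms(1) in \<open>auto simp: add_subgroup_def\<close>)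

lemma idempotent_combine:
  fixes u v :: "'a::ring"
  assumes "u * u = u" "v * v = v" "u * v = 0"
  shows "(u + v - v * u) * (u + v - v * u) = u + v - v * u"
  using assms by (simp add: algebra_simps mult.assoc[symmetric])

section \<open>Generated one-sided ideals\<close>

lemma right_ideal_rideal_gen: "right_ideal (rideal_gen X)"
  unfolding rideal_gen_def right_ideal_def add_subgroup_def by auto

lemma rideal_gen_superset: "X \<subseteq> rideal_gen X"
  unfolding rideal_gen_def by auto

lemma rideal_gen_minimal: "right_ideal J \<Longrightarrow> X \<subseteq> J \<Longrightarrow> rideal_gen X \<subseteq> J"
  unfolding rideal_gen_def by auto

lemma rideal_gen_mono: "X \<subseteq> Y \<Longrightarrow> rideal_gen X \<subseteq> rideal_gen Y"
  unfolding rideal_gen_def by auto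

lemma rideal_gen_eqI:
  assumes "X \<subseteq> rideal_gen Y" "Y \<subseteq> rideal_gen X"
  shows "rideal_gen X = rideal_gen Y"
  using rideal_gen_minimal[OF right_ideal_rideal_gen] assms by (metis subset_antisym)

lemma rideal_gen_zero: "0 \<in> rideal_gen X"
  and rideal_gen_add: "a \<in> rideal_gen X \<Longrightarrow> b \<in> rideal_gen X \<Longrightarrow> a + b \<in> rideal_gen X"
  and rideal_gen_diff: "a \<in> rideal_gen X \<Longrightarrow> b \<in> rideal_gen X \<Longrightarrow> a - b \<in> rideal_gen X"
  and rideal_gen_mult: "a \<in> rideal_gen X \<Longrightarrow> a * r \<in> rideal_gen X"
  using right_ideal_rideal_gen[of X] add_subgroup_diff
  unfolding right_ideal_def add_subgroup_def by blast+

lemma rideal_gen_Un_cong: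
  assumes "rideal_gen A = rideal_gen A'" "rideal_gen B = rideal_gen B'"
  shows "rideal_gen (A \<union> B) = rideal_gen (A' \<union> B')"
proof (rule rideal_gen_eqI)
  show "A \<union> B \<subseteq> rideal_gen (A' \<union> B')"
    using assms rideal_gen_superset[of A] rideal_gen_superset[of B]
      rideal_gen_mono[of A' "A' \<union> B'"] rideal_gen_mono[of B' "A' \<union> B'"] by blast
  show "A' \<union> B' \<subseteq> rideal_gen (A \<union> B)"
    using assms rideal_gen_superset[of A'] rideal_gen_superset[of B']
      rideal_gen_mono[of A "A \<union> B"] rideal_gen_mono[of B "A \<union> B"] by blast
qed

lemma rideal_gen_insert_zero: "rideal_gen (insert 0 X) = rideal_gen X"
  by (rule rideal_gen_eqI)
    (use rideal_gen_zero rideal_gen_superset[of X] rideal_gen_superset[of "insert 0 X"] in auto)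

lemma rideal_gen_insert_diff:
  assumes "y \<in> rideal_gen X"
  shows "rideal_gen (insert (x - y) X) = rideal_gen (insert x X)"
proof (rule rideal_gen_eqI)
  have "y \<in> rideal_gen (insert x X)" "x \<in> rideal_gen (insert x X)"
    using assms rideal_gen_mono[of X "insert x X"] rideal_gen_superset by blast+
  then show "insert (x - y) X \<subseteq> rideal_gen (insert x X)"
    using rideal_gen_diff rideal_gen_superset by blast
  have "x - y \<in> rideal_gen (insert (x - y) X)" "y \<in> rideal_gen (insert (x - y) X)"
    using assms rideal_gen_mono[of X "insert (x - y) X"] rideal_gen_superset by blast+
  then have "x - y + y \<in> rideal_gen (insert (x - y) X)"
    by (rule rideal_gen_add)
  then show "insert x X \<subseteq> rideal_gen (insert (x - y) X)"
    using rideal_gen_superset[of "insert (x - y) X"] by auto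
qed

lemma rideal_gen_regular:
  assumes "x * r * x = x"
  shows "rideal_gen {x * r} = rideal_gen {x}"
proof (rule rideal_gen_eqI)
  show "{x * r} \<subseteq> rideal_gen {x}"
    using rideal_gen_mult rideal_gen_superset by blast
  have "x * r * x \<in> rideal_gen {x * r}"
    using rideal_gen_mult rideal_gen_superset by blast
  then show "{x} \<subseteq> rideal_gen {x * r}"
    using assms by simp
qed

lemma rideal_gen_idempotent_combine:
  assumes "u * u = u" "v * v = v" "u * v = 0"
  shows "rideal_gen {u + v - v * u} = rideal_gen {u, v}"
proof (rule rideal_gen_eqI)
  have "u \<in> rideal_gen {u, v}" "v \<in> rideal_gen {u, v}"
    using rideal_gen_superset by blast+
  then show "{u + v - v * u} \<subseteq> rideal_gen {u, v}"
    by (simp add: rideal_gen_add rideal_gen_diff rideal_gen_mult)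
  have "(u + v - v * u) * u = u" "(u + v - v * u) * v = v"
    using assms by (simp_all add: algebra_simps mult.assoc)
  moreover have "(u + v - v * u) * a \<in> rideal_gen {u + v - v * u}" for a
    using rideal_gen_mult rideal_gen_superset by blast
  ultimately show "{u, v} \<subseteq> rideal_gen {u + v - v * u}"
    by (metis empty_subsetI insert_subset)
qed

lemma rideal_gen_singleton:
  assumes "x * b = x"
  shows "rideal_gen {x} = range ((*) x)"
proof
  have "right_ideal (range ((*) x))"
    unfolding right_ideal_def add_subgroup_def
    by (auto simp: image_iff mult.assoc simp flip: distrib_left)
      (metis mult_zero_right, metis minus_mult_right)
  then show "rideal_gen {x} \<subseteq> range ((*) x)"
    using rangeI[of "(*) x" b] assms by (intro rideal_gen_minimal) auto
  show "range ((*) x) \<subseteq> rideal_gen {x}"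
    using rideal_gen_mult rideal_gen_superset by blast
qed

lemma regular_if_rideal_gen_idempotent:
  assumes "x * b = x" "u * u = u" "rideal_gen {x} = rideal_gen {u}"
  shows "\<exists>r. x = x * r * x"
proof -
  have "u \<in> range ((*) x)" "x \<in> range ((*) u)"
    using assms rideal_gen_singleton rideal_gen_superset by blast+
  then obtain c d where "u = x * c" "x = u * d"
    by blast
  then have "x = x * c * x"
    using assms(2) by (metis mult.assoc)
  then show ?thesis ..
qed

lemma left_ideal_lideal_gen: "left_ideal (lideal_gen X)"
  unfolding lideal_gen_def left_ideal_def add_subgroup_def by auto

lemma lideal_gen_superset: "X \<subseteq> lideal_gen X"
  unfolding lideal_gen_def by auto

lemma lideal_gen_minimal: "left_ideal J \<Longrightarrow> X \<subseteq> J \<Longrightarrow> lideal_gen X \<subseteq> J"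
  unfolding lideal_gen_def by auto

lemma lideal_gen_mono: "X \<subseteq> Y \<Longrightarrow> lideal_gen X \<subseteq> lideal_gen Y"
  unfolding lideal_gen_def by auto

lemma lideal_gen_eqI:
  assumes "X \<subseteq> lideal_gen Y" "Y \<subseteq> lideal_gen X"
  shows "lideal_gen X = lideal_gen Y"
  using lideal_gen_minimal[OF left_ideal_lideal_gen] assms by (metis subset_antisym)

lemma lideal_gen_zero: "0 \<in> lideal_gen X"
  and lideal_gen_add: "a \<in> lideal_gen X \<Longrightarrow> b \<in> lideal_gen X \<Longrightarrow> a + b \<in> lideal_gen X"
  and lideal_gen_diff: "a \<in> lideal_gen X \<Longrightarrow> b \<in> lideal_gen X \<Longrightarrow> a - b \<in> lideal_gen X"
  and lideal_gen_mult: "a \<in> lideal_gen X \<Longrightarrow> r * a \<in> lideal_gen X"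
  using left_ideal_lideal_gen[of X] add_subgroup_diff
  unfolding left_ideal_def add_subgroup_def by blast+

lemma lideal_gen_Un_cong:
  assumes "lideal_gen A = lideal_gen A'" "lideal_gen B = lideal_gen B'"
  shows "lideal_gen (A \<union> B) = lideal_gen (A' \<union> B')"
proof (rule lideal_gen_eqI)
  show "A \<union> B \<subseteq> lideal_gen (A' \<union> B')"
    using assms lideal_gen_superset[of A] lideal_gen_superset[of B]
      lideal_gen_mono[of A' "A' \<union> B'"] lideal_gen_mono[of B' "A' \<union> B'"] by blast
  show "A' \<union> B' \<subseteq> lideal_gen (A \<union> B)"
    using assms lideal_gen_superset[of A'] lideal_gen_superset[of B']
      lideal_gen_mono[of A "A \<union> B"] lideal_gen_mono[of B "A \<union> B"] by blast
qed

lemma lideal_gen_insert_zero: "lideal_gen (insert 0 X) = lideal_gen X"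
  by (rule lideal_gen_eqI)
    (use lideal_gen_zero lideal_gen_superset[of X] lideal_gen_superset[of "insert 0 X"] in auto)

lemma lideal_gen_insert_diff:
  assumes "y \<in> lideal_gen X"
  shows "lideal_gen (insert (x - y) X) = lideal_gen (insert x X)"
proof (rule lideal_gen_eqI)
  have "y \<in> lideal_gen (insert x X)" "x \<in> lideal_gen (insert x X)"
    using assms lideal_gen_mono[of X "insert x X"] lideal_gen_superset by blast+
  then show "insert (x - y) X \<subseteq> lideal_gen (insert x X)"
    using lideal_gen_diff lideal_gen_superset by blast
  have "x - y \<in> lideal_gen (insert (x - y) X)" "y \<in> lideal_gen (insert (x - y) X)"
    using assms lideal_gen_mono[of X "insert (x - y) X"] lideal_gen_superset by blast+
  then have "x - y + y \<in> lideal_gen (insert (x - y) X)"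
    by (rule lideal_gen_add)
  then show "insert x X \<subseteq> lideal_gen (insert (x - y) X)"
    using lideal_gen_superset[of "insert (x - y) X"] by auto
qed

lemma lideal_gen_regular:
  assumes "x * r * x = x"
  shows "lideal_gen {r * x} = lideal_gen {x}"
proof (rule lideal_gen_eqI)
  show "{r * x} \<subseteq> lideal_gen {x}"
    using lideal_gen_mult lideal_gen_superset by blast
  have "x * (r * x) \<in> lideal_gen {r * x}"
    using lideal_gen_mult lideal_gen_superset by blast
  then show "{x} \<subseteq> lideal_gen {r * x}"
    using assms by (simp add: mult.assoc)
qed

lemma lideal_gen_idempotent_combine:
  assumes "u * u = u" "v * v = v" "v * u = 0"
  shows "lideal_gen {u + v - u * v} = lideal_gen {u, v}"
proof (rule lideal_gen_eqI)
  have "u \<in> lideal_gen {u, v}" "v \<in> lideal_gen {u, v}"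
    using lideal_gen_superset by blast+
  then show "{u + v - u * v} \<subseteq> lideal_gen {u, v}"
    by (simp add: lideal_gen_add lideal_gen_diff lideal_gen_mult)
  have "u * (u + v - u * v) = u" "v * (u + v - u * v) = v"
    using assms by (simp_all add: algebra_simps mult.assoc[symmetric])
  moreover have "a * (u + v - u * v) \<in> lideal_gen {u + v - u * v}" for a
    using lideal_gen_mult lideal_gen_superset by blast
  ultimately show "{u, v} \<subseteq> lideal_gen {u + v - u * v}"
    by (metis empty_subsetI insert_subset)
qed

section \<open>Inverses in the partial groupoid\<close>

lemma inner_inverse_iff_ginv:
  assumes "cancellative m z" "LRI m" "m z s = z" "s \<noteq> z"
  shows "m (m s t) s = s \<longleftrightarrow> t = ginv m s"
proof -
  have cancel: "m p u \<noteq> z \<Longrightarrow> m p u = m q u \<Longrightarrow> p = q"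
      "m u p \<noteq> z \<Longrightarrow> m u p = m u q \<Longrightarrow> p = q" for p q u
    using assms(1) unfolding cancellative_def by blast+
  have unique: "t = s'" if "lri_wit m s s' e f" "m (m s t) s = s" for s' e f t
  proof -
    have "m (m s s') s = s"
      using that(1) unfolding lri_wit_def by simp
    then have "m s t = m s s'"
      using that(2) assms(4) cancel(1) by metis
    moreover have "m s t \<noteq> z"
      using that(2) assms(3,4) by metis
    ultimately show "t = s'"
      using cancel(2) by metis
  qed
  obtain s' e f where wit: "lri_wit m s s' e f"
    using assms(2) unfolding LRI_def by blast
  have "ginv m s = s'"
    unfolding ginv_def
  proof (rule the_equality)
    show "\<exists>e f. lri_wit m s s' e f"
      using wit by blast
    fix s'' assume "\<exists>e f. lri_wit m s s'' e f"
    then have "m (m s s'') s = s"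
      unfolding lri_wit_def by auto
    then show "s'' = s'"
      by (rule unique[OF wit])
  qed
  moreover have "m (m s s') s = s"
    using wit unfolding lri_wit_def by simp
  ultimately show ?thesis
    using unique[OF wit] by blast
qed

lemma ginv_lri_wit:
  assumes "cancellative m z" "LRI m" "m z s = z" "s \<noteq> z"
  shows "\<exists>e f. lri_wit m s (ginv m s) e f"
proof -
  obtain s' e f where wit: "lri_wit m s s' e f"
    using assms(2) unfolding LRI_def by blast
  then have "m (m s s') s = s"
    unfolding lri_wit_def by simp
  then have "s' = ginv m s"
    using inner_inverse_iff_ginv[OF assms] by blast
  then show ?thesis
    using wit by blast
qed

section \<open>Graded rings\<close>

locale graded_ring =
  fixes m :: "'s \<Rightarrow> 's \<Rightarrow> 's" and z :: 's and G :: "'s \<Rightarrow> 'a::ring set"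
  assumes graded_ring_inducing: "graded_ring_inducing m z G"
begin

lemmas graded_ring_inducing_unfolded = graded_ring_inducing[unfolded graded_ring_inducing_def]

lemma add_subgroup_G: "add_subgroup (G s)"
  using graded_ring_inducing_unfolded by simp

lemma G_z: "G z = {0}"
  using graded_ring_inducing_unfolded by simp

lemma z_absorbing: "m z s = z" "m s z = z"
  using graded_ring_inducing_unfolded by simp_all

lemma mult_G: "x \<in> G s \<Longrightarrow> y \<in> G t \<Longrightarrow> x * y \<in> G (m s t)"
  using graded_ring_inducing_unfolded by simp

lemma homogeneous_decomposition: "\<exists>F f. finite F \<and> (\<forall>s\<in>F. f s \<in> G s) \<and> x = (\<Sum>s\<in>F. f s)"
  using graded_ring_inducing_unfolded by simp

lemma homogeneous_independent:
  "finite F \<Longrightarrow> \<forall>s\<in>F. f s \<in> G s \<Longrightarrow> (\<Sum>s\<in>F. f s) = 0 \<Longrightarrow> s \<in> F \<Longrightarrow> f s = 0"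
  using graded_ring_inducing_unfolded by simp

lemma homogI: "x \<in> G s \<Longrightarrow> x \<in> homog G"
  unfolding homog_def by blast

lemma zero_G: "0 \<in> G s"
  using add_subgroup_G unfolding add_subgroup_def by blast

lemma G_nonzero_degree: "x \<in> G s \<Longrightarrow> x \<noteq> 0 \<Longrightarrow> s \<noteq> z"
  using G_z by auto

lemma G_disjoint:
  assumes "x \<in> G s" "x \<in> G t" "x \<noteq> 0"
  shows "s = t"
proof (rule ccontr)
  assume "s \<noteq> t"
  then have "(if s = s then x else - x) = 0"
    using assms add_subgroup_G unfolding add_subgroup_def
    by (intro homogeneous_independent[of "{s, t}" "\<lambda>c. if c = s then x else - x"]) auto
  then show False
    using assms(3) by simp
qed

lemma deg_eq: "x \<in> G s \<Longrightarrow> x \<noteq> 0 \<Longrightarrow> deg G x = s"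
  unfolding deg_def by (blast intro: the_equality G_disjoint)

lemma homogeneous_component:
  assumes "finite F" "\<And>t. t \<in> F \<Longrightarrow> g t \<in> G (d t)" "y \<in> G c" "(\<Sum>t\<in>F. g t) = y"
  shows "(\<Sum>t | t \<in> F \<and> d t = c. g t) = y"
proof -
  define D where "D = insert c (d ` F)"
  define h where "h c' = (\<Sum>t | t \<in> F \<and> d t = c'. g t) - (if c' = c then y else 0)" for c'
  have "finite D"
    using assms(1) by (simp add: D_def)
  have "h c' \<in> G c'" for c'
    unfolding h_def using assms(2,3) zero_G
    by (intro add_subgroup_diff[OF add_subgroup_G] add_subgroup_sum[OF add_subgroup_G]) auto
  have "(\<Sum>c'\<in>D. \<Sum>t | t \<in> F \<and> d t = c'. g t) = (\<Sum>t\<in>F. g t)"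
    by (rule sum.group) (use \<open>finite D\<close> assms(1) in \<open>auto simp: D_def\<close>)
  then have "(\<Sum>c'\<in>D. h c') = 0"
    using \<open>finite D\<close> assms(4) by (simp add: h_def sum_subtractf D_def)
  then have "h c = 0"
    using homogeneous_independent[OF \<open>finite D\<close>] \<open>\<And>c'. h c' \<in> G c'\<close> by (simp add: D_def)
  then show ?thesis
    by (simp add: h_def)
qed

end

section \<open>Graded von Neumann regularity\<close>

locale lri_graded_ring = graded_ring m z G
  for m :: "'s \<Rightarrow> 's \<Rightarrow> 's" and z :: 's and G :: "'s \<Rightarrow> 'a::ring set" +
  assumes cancellative: "cancellative m z" and LRI: "LRI m"
begin

lemma ginv_wit: "s \<noteq> z \<Longrightarrow> \<exists>e f. lri_wit m s (ginv m s) e f"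
  by (rule ginv_lri_wit[OF cancellative LRI z_absorbing(1)])

lemma regular_homogeneous_inverse_degree:
  assumes x: "x \<in> G s" and reg: "x * r * x = x"
  shows "\<exists>r'\<in>G (ginv m s). x * r' * x = x"
proof (cases "x = 0")
  case True
  then show ?thesis
    using zero_G by auto
next
  case False
  then have "s \<noteq> z"
    using x G_nonzero_degree by blast
  obtain F f where F: "finite F" "\<forall>t\<in>F. f t \<in> G t" "r = (\<Sum>t\<in>F. f t)"
    using homogeneous_decomposition by blast
  define r' where "r' = (\<Sum>t | t \<in> F \<and> t = ginv m s. f t)"
  have "r' \<in> G (ginv m s)"
    unfolding r'_def using F(2) by (intro add_subgroup_sum[OF add_subgroup_G]) auto
  have "(\<Sum>t\<in>F. x * f t * x) = x"
    using reg unfolding F(3) by (simp add: sum_distrib_left sum_distrib_right)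
  then have "(\<Sum>t | t \<in> F \<and> m (m s t) s = s. x * f t * x) = x"
    using F(1,2) x mult_G by (intro homogeneous_component) auto
  moreover have "{t. t \<in> F \<and> m (m s t) s = s} = {t. t \<in> F \<and> t = ginv m s}"
    using inner_inverse_iff_ginv[OF cancellative LRI z_absorbing(1) \<open>s \<noteq> z\<close>] by blast
  ultimately have "x * r' * x = x"
    unfolding r'_def by (simp add: sum_distrib_left sum_distrib_right)
  with \<open>r' \<in> G (ginv m s)\<close> show ?thesis ..
qed

lemma rideal_gen_insert_homogeneous:
  assumes vnr: "graded_von_neumann_regular G"
    and u: "u \<in> G e" "u * u = u" and x: "x \<in> G s" "x \<noteq> 0"
    and e: "m s (ginv m s) = e"
  shows "\<exists>w\<in>G e. w * w = w \<and> rideal_gen {x, u} = rideal_gen {w}"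
proof -
  obtain e' f where "lri_wit m s (ginv m s) e' f"
    using ginv_wit G_nonzero_degree x by blast
  then have "m e s = s" "m e e = e"
    using e unfolding lri_wit_def by auto
  define x' where "x' = x - u * x"
  have "x' \<in> G s"
    unfolding x'_def using mult_G[OF u(1) x(1)] \<open>m e s = s\<close> x(1)
    by (intro add_subgroup_diff[OF add_subgroup_G]) auto
  then obtain r where r: "r \<in> G (ginv m s)" "x' * r * x' = x'"
    using vnr regular_homogeneous_inverse_degree
    unfolding graded_von_neumann_regular_def homog_def by (metis UNIV_I UN_I)
  define v where "v = x' * r"
  have "v \<in> G e"
    using mult_G[OF \<open>x' \<in> G s\<close> r(1)] e by (simp add: v_def)
  have "v * v = v"
    using r(2) by (metis v_def mult.assoc)
  have "u * v = 0"
    using u(2) by (simp add: v_def x'_def right_diff_distrib mult.assoc[symmetric])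
  define w where "w = u + v - v * u"
  have "w \<in> G e"
    unfolding w_def using u(1) \<open>v \<in> G e\<close> mult_G[OF \<open>v \<in> G e\<close> u(1)] \<open>m e e = e\<close>
    by (auto intro!: add_subgroup_diff[OF add_subgroup_G] add_subgroup_add[OF add_subgroup_G])
  have "w * w = w"
    using idempotent_combine[OF u(2) \<open>v * v = v\<close> \<open>u * v = 0\<close>] by (simp add: w_def)
  have "rideal_gen {x, u} = rideal_gen {x', u}"
    unfolding x'_def using rideal_gen_mult rideal_gen_superset
    by (intro rideal_gen_insert_diff[symmetric]) blast
  also have "\<dots> = rideal_gen {v, u}"
    using rideal_gen_Un_cong[OF rideal_gen_regular[OF r(2)] refl, of "{u}"]
    by (simp add: v_def insert_commute)
  also have "\<dots> = rideal_gen {w}"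
    using rideal_gen_idempotent_combine[OF u(2) \<open>v * v = v\<close> \<open>u * v = 0\<close>]
    by (simp add: w_def insert_commute)
  finally show ?thesis
    using \<open>w \<in> G e\<close> \<open>w * w = w\<close> by blast
qed

lemma rideal_gen_homogeneous_idempotent:
  assumes vnr: "graded_von_neumann_regular G"
  shows "finite X \<Longrightarrow> X \<subseteq> homog G \<Longrightarrow> \<forall>x\<in>X. x \<noteq> 0 \<longrightarrow> m (deg G x) (ginv m (deg G x)) = e
    \<Longrightarrow> \<exists>u\<in>G e. u * u = u \<and> rideal_gen X = rideal_gen {u}"
proof (induction X rule: finite_induct)
  case empty
  have "rideal_gen {} = rideal_gen {0}"
    using rideal_gen_insert_zero[of "{}", symmetric] by simp
  then show ?case
    using zero_G[of e] by (intro bexI[of _ 0]) auto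
next
  case (insert x X)
  then obtain u where u: "u \<in> G e" "u * u = u" "rideal_gen X = rideal_gen {u}"
    by auto
  have "rideal_gen (insert x X) = rideal_gen {x, u}"
    using rideal_gen_Un_cong[OF refl u(3), of "{x}"] by (simp add: insert_commute)
  consider "x = 0" | s where "x \<in> G s" "x \<noteq> 0"
    using insert.prems(1) unfolding homog_def by auto
  then show ?case
  proof cases
    case 1
    then show ?thesis
      using u \<open>rideal_gen (insert x X) = rideal_gen {x, u}\<close> by (auto simp: rideal_gen_insert_zero)
  next
    case (2 s)
    then have "m s (ginv m s) = e"
      using insert.prems(2) deg_eq by auto
    then show ?thesis
      using rideal_gen_insert_homogeneous[OF vnr u(1,2) 2] \<open>rideal_gen (insert x X) = rideal_gen {x, u}\<close>
      by auto
  qed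
qed

lemma lideal_gen_insert_homogeneous:
  assumes vnr: "graded_von_neumann_regular G"
    and u: "u \<in> G f" "u * u = u" and x: "x \<in> G s" "x \<noteq> 0"
    and f: "m (ginv m s) s = f"
  shows "\<exists>w\<in>G f. w * w = w \<and> lideal_gen {x, u} = lideal_gen {w}"
proof -
  obtain e f' where "lri_wit m s (ginv m s) e f'"
    using ginv_wit G_nonzero_degree x by blast
  then have "m s f = s" "m f f = f"
    using f unfolding lri_wit_def by auto
  define x' where "x' = x - x * u"
  have "x' \<in> G s"
    unfolding x'_def using mult_G[OF x(1) u(1)] \<open>m s f = s\<close> x(1)
    by (intro add_subgroup_diff[OF add_subgroup_G]) auto
  then obtain r where r: "r \<in> G (ginv m s)" "x' * r * x' = x'"
    using vnr regular_homogeneous_inverse_degree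
    unfolding graded_von_neumann_regular_def homog_def by (metis UNIV_I UN_I)
  define v where "v = r * x'"
  have "v \<in> G f"
    using mult_G[OF r(1) \<open>x' \<in> G s\<close>] f by (simp add: v_def)
  have "v * v = v"
    using r(2) by (metis v_def mult.assoc)
  have "v * u = 0"
    using u(2) by (simp add: v_def x'_def left_diff_distrib mult.assoc)
  define w where "w = u + v - u * v"
  have "w \<in> G f"
    unfolding w_def using u(1) \<open>v \<in> G f\<close> mult_G[OF u(1) \<open>v \<in> G f\<close>] \<open>m f f = f\<close>
    by (auto intro!: add_subgroup_diff[OF add_subgroup_G] add_subgroup_add[OF add_subgroup_G])
  have "w * w = w"
    using idempotent_combine[OF \<open>v * v = v\<close> u(2) \<open>v * u = 0\<close>] by (simp add: w_def add.commute)
  have "lideal_gen {x, u} = lideal_gen {x', u}"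
    unfolding x'_def using lideal_gen_mult lideal_gen_superset
    by (intro lideal_gen_insert_diff[symmetric]) blast
  also have "\<dots> = lideal_gen {v, u}"
    using lideal_gen_Un_cong[OF lideal_gen_regular[OF r(2)] refl, of "{u}"]
    by (simp add: v_def insert_commute)
  also have "\<dots> = lideal_gen {w}"
    using lideal_gen_idempotent_combine[OF u(2) \<open>v * v = v\<close> \<open>v * u = 0\<close>]
    by (simp add: w_def insert_commute)
  finally show ?thesis
    using \<open>w \<in> G f\<close> \<open>w * w = w\<close> by blast
qed

lemma lideal_gen_homogeneous_idempotent:
  assumes vnr: "graded_von_neumann_regular G"
  shows "finite X \<Longrightarrow> X \<subseteq> homog G \<Longrightarrow> \<forall>x\<in>X. x \<noteq> 0 \<longrightarrow> m (ginv m (deg G x)) (deg G x) = f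
    \<Longrightarrow> \<exists>u\<in>G f. u * u = u \<and> lideal_gen X = lideal_gen {u}"
proof (induction X rule: finite_induct)
  case empty
  have "lideal_gen {} = lideal_gen {0}"
    using lideal_gen_insert_zero[of "{}", symmetric] by simp
  then show ?case
    using zero_G[of f] by (intro bexI[of _ 0]) auto
next
  case (insert x X)
  then obtain u where u: "u \<in> G f" "u * u = u" "lideal_gen X = lideal_gen {u}"
    by auto
  have "lideal_gen (insert x X) = lideal_gen {x, u}"
    using lideal_gen_Un_cong[OF refl u(3), of "{x}"] by (simp add: insert_commute)
  consider "x = 0" | s where "x \<in> G s" "x \<noteq> 0"
    using insert.prems(1) unfolding homog_def by auto
  then show ?case
  proof cases
    case 1
    then show ?thesis
      using u \<open>lideal_gen (insert x X) = lideal_gen {x, u}\<close> by (auto simp: lideal_gen_insert_zero)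
  next
    case (2 s)
    then have "m (ginv m s) s = f"
      using insert.prems(2) deg_eq by auto
    then show ?thesis
      using lideal_gen_insert_homogeneous[OF vnr u(1,2) 2] \<open>lideal_gen (insert x X) = lideal_gen {x, u}\<close>
      by auto
  qed
qed

end

definition principal_rideals_idempotent_generated :: "('s \<Rightarrow> 'a::ring set) \<Rightarrow> bool" where
  "principal_rideals_idempotent_generated G \<longleftrightarrow>
     (\<forall>x\<in>homog G. \<exists>u\<in>homog G. u * u = u \<and> rideal_gen {x} = rideal_gen {u})"

definition principal_lideals_idempotent_generated :: "('s \<Rightarrow> 'a::ring set) \<Rightarrow> bool" where
  "principal_lideals_idempotent_generated G \<longleftrightarrow>
     (\<forall>x\<in>homog G. \<exists>u\<in>homog G. u * u = u \<and> lideal_gen {x} = lideal_gen {u})"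

definition fg_rideals_idempotent_generated ::
    "('s \<Rightarrow> 's \<Rightarrow> 's) \<Rightarrow> 's \<Rightarrow> ('s \<Rightarrow> 'a::ring set) \<Rightarrow> bool" where
  "fg_rideals_idempotent_generated m z G \<longleftrightarrow>
     (\<forall>e X. m e e = e \<and> e \<noteq> z \<and> finite X \<and> X \<subseteq> homog G \<and>
        (\<forall>x\<in>X. x \<noteq> 0 \<longrightarrow> m (deg G x) (ginv m (deg G x)) = e) \<longrightarrow>
        (\<exists>u\<in>homog G. u * u = u \<and> rideal_gen X = rideal_gen {u}))"

definition fg_lideals_idempotent_generated ::
    "('s \<Rightarrow> 's \<Rightarrow> 's) \<Rightarrow> 's \<Rightarrow> ('s \<Rightarrow> 'a::ring set) \<Rightarrow> bool" where
  "fg_lideals_idempotent_generated m z G \<longleftrightarrow>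
     (\<forall>e X. m e e = e \<and> e \<noteq> z \<and> finite X \<and> X \<subseteq> homog G \<and>
        (\<forall>x\<in>X. x \<noteq> 0 \<longrightarrow> m (ginv m (deg G x)) (deg G x) = e) \<longrightarrow>
        (\<exists>u\<in>homog G. u * u = u \<and> lideal_gen X = lideal_gen {u}))"

context lri_graded_ring
begin

lemma fg_rideals_idempotent_generated_if_regular:
  assumes "graded_von_neumann_regular G"
  shows "fg_rideals_idempotent_generated m z G"
  using rideal_gen_homogeneous_idempotent[OF assms] homogI
  unfolding fg_rideals_idempotent_generated_def by meson

lemma fg_lideals_idempotent_generated_if_regular:
  assumes "graded_von_neumann_regular G"
  shows "fg_lideals_idempotent_generated m z G"
  using lideal_gen_homogeneous_idempotent[OF assms] homogI
  unfolding fg_lideals_idempotent_generated_def by meson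

lemma principal_rideals_idempotent_generated_if_fg:
  assumes fg: "fg_rideals_idempotent_generated m z G"
  shows "principal_rideals_idempotent_generated G"
  unfolding principal_rideals_idempotent_generated_def
proof
  fix x assume x: "x \<in> homog G"
  consider "x = 0" | s where "x \<in> G s" "x \<noteq> 0"
    using x unfolding homog_def by auto
  then show "\<exists>u\<in>homog G. u * u = u \<and> rideal_gen {x} = rideal_gen {u}"
  proof cases
    case 1
    then show ?thesis
      using x by (intro bexI[of _ 0]) auto
  next
    case (2 s)
    then obtain e f where "lri_wit m s (ginv m s) e f"
      using ginv_wit G_nonzero_degree by blast
    then have "m e e = e" "m s (ginv m s) = e" "e \<noteq> z"
      using 2 G_nonzero_degree z_absorbing unfolding lri_wit_def by metis+
    then show ?thesis
      using fg x 2 deg_eq unfolding fg_rideals_idempotent_generated_def by auto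
  qed
qed

lemma principal_lideals_idempotent_generated_if_fg:
  assumes fg: "fg_lideals_idempotent_generated m z G"
  shows "principal_lideals_idempotent_generated G"
  unfolding principal_lideals_idempotent_generated_def
proof
  fix x assume x: "x \<in> homog G"
  consider "x = 0" | s where "x \<in> G s" "x \<noteq> 0"
    using x unfolding homog_def by auto
  then show "\<exists>u\<in>homog G. u * u = u \<and> lideal_gen {x} = lideal_gen {u}"
  proof cases
    case 1
    then show ?thesis
      using x by (intro bexI[of _ 0]) auto
  next
    case (2 s)
    then obtain e f where "lri_wit m s (ginv m s) e f"
      using ginv_wit G_nonzero_degree by blast
    then have "m f f = f" "m (ginv m s) s = f" "f \<noteq> z"
      using 2 G_nonzero_degree z_absorbing unfolding lri_wit_def by metis+
    then show ?thesis
      using fg x 2 deg_eq unfolding fg_lideals_idempotent_generated_def by auto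
  qed
qed

end

lemma regular_if_principal_rideals_idempotent_generated:
  assumes "\<forall>x\<in>homog G. \<exists>b. x * b = x" and "principal_rideals_idempotent_generated G"
  shows "graded_von_neumann_regular G"
  using assms regular_if_rideal_gen_idempotent
  unfolding principal_rideals_idempotent_generated_def graded_von_neumann_regular_def by metis

theorem proposition4p8:
  fixes m :: "'s \<Rightarrow> 's \<Rightarrow> 's" and z :: 's and G :: "'s \<Rightarrow> 'a::ring set"
  assumes "nearly_eps_strongly_graded m z G"
  shows "(graded_von_neumann_regular G \<longleftrightarrow>
           ((\<forall>x\<in>homog G. \<exists>u\<in>homog G. u * u = u \<and> rideal_gen {x} = rideal_gen {u}) \<and>
            (\<forall>x\<in>homog G. \<exists>u\<in>homog G. u * u = u \<and> lideal_gen {x} = lideal_gen {u})))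
       \<and> (graded_von_neumann_regular G \<longleftrightarrow>
           ((\<forall>e X. m e e = e \<and> e \<noteq> z \<and> finite X \<and> X \<subseteq> homog G \<and>
                 (\<forall>x\<in>X. x \<noteq> 0 \<longrightarrow> m (deg G x) (ginv m (deg G x)) = e) \<longrightarrow>
                 (\<exists>u\<in>homog G. u * u = u \<and> rideal_gen X = rideal_gen {u})) \<and>
            (\<forall>e X. m e e = e \<and> e \<noteq> z \<and> finite X \<and> X \<subseteq> homog G \<and>
                 (\<forall>x\<in>X. x \<noteq> 0 \<longrightarrow> m (ginv m (deg G x)) (deg G x) = e) \<longrightarrow>
                 (\<exists>u\<in>homog G. u * u = u \<and> lideal_gen X = lideal_gen {u}))))"
proof -
  interpret lri_graded_ring m z G
    using assms unfolding nearly_eps_strongly_graded_def by unfold_locales auto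
  have "\<forall>x\<in>homog G. \<exists>b. x * b = x"
    using assms unfolding nearly_eps_strongly_graded_def homog_def by blast
  then have "graded_von_neumann_regular G \<longleftrightarrow>
      principal_rideals_idempotent_generated G \<and> principal_lideals_idempotent_generated G"
    and "graded_von_neumann_regular G \<longleftrightarrow>
      fg_rideals_idempotent_generated m z G \<and> fg_lideals_idempotent_generated m z G"
    using regular_if_principal_rideals_idempotent_generated
      principal_rideals_idempotent_generated_if_fg principal_lideals_idempotent_generated_if_fg
      fg_rideals_idempotent_generated_if_regular fg_lideals_idempotent_generated_if_regular
    by blast+
  then show ?thesis
    unfolding principal_rideals_idempotent_generated_def principal_lideals_idempotent_generated_def
      fg_rideals_idempotent_generated_def fg_lideals_idempotent_generated_def
    by (rule conjI)
qed

end
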